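(* Let $A$ be a vector space of dimension $n\geq 2$ over $\mathbb F$, and let $f,g:A\to\mathbb F$ be linear functions. Define $\circ:A\otimes A\to A$ by $x\circ y=f(y)x+g(x)y$ for all $x,y\in A$. Then $(A,\circ)$ is an anti-pre-Lie algebra if and only if $f=0$ or $g=2f$.
   Context: All vector spaces are finite-dimensional over a field $\mathbb F$ of characteristic $0$. An anti-pre-Lie algebra is a vector space $A$ with a bilinear operation $\circ$ such that, writing $[x,y]=x\circ y-y\circ x$, for all $x,y,z\in A$: (i) $x\circ(y\circ z)-y\circ(x\circ z)=[y,x]\circ z$, and (ii) $[x,y]\circ z+[y,z]\circ x+[z,x]\circ y=0$. *)

theory Defs
  imports "HOL-Analysis.Analysis"
begin

definition commutator :: "('v::ab_group_add \<Rightarrow> 'v \<Rightarrow> 'v) \<Rightarrow> 'v \<Rightarrow> 'v \<Rightarrow> 'v" where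
  "commutator op x y = op x y - op y x"

definition anti_pre_Lie :: "('a::field \<Rightarrow> 'v::ab_group_add \<Rightarrow> 'v) \<Rightarrow> ('v \<Rightarrow> 'v \<Rightarrow> 'v) \<Rightarrow> bool" where
  "anti_pre_Lie sc op \<longleftrightarrow>
     (\<forall>x. Vector_Spaces.linear sc sc (op x)) \<and>
     (\<forall>y. Vector_Spaces.linear sc sc (\<lambda>x. op x y)) \<and>
     (\<forall>x y z. op x (op y z) - op y (op x z) = op (commutator op y x) z) \<and>
     (\<forall>x y z. op (commutator op x y) z + op (commutator op y z) x + op (commutator op z x) y = 0)"

end

theory Submission
  imports Defs
begin

text \<open>Write \<open>h = 2 f - g\<close>. For \<open>x \<circ> y = f(y) x + g(x) y\<close> identity (ii) and bilinearity
  hold for all \<open>f, g\<close>, while the defect of identity (i) is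
  \<open>f(z) (h(y) x - h(x) y) - (f(x) g(y) - f(y) g(x)) z\<close>.
  If it vanishes and the cross term \<open>f(x) g(y) - f(y) g(x)\<close> were nonzero, every \<open>z\<close> would be
  a multiple of \<open>h(y) x - h(x) y\<close>, impossible in dimension at least 2. So the cross term
  vanishes, and if \<open>f \<noteq> 0\<close> then \<open>h(y) x = h(x) y\<close> for all \<open>x, y\<close>; taking \<open>x\<close> outside
  the line through \<open>y\<close> gives \<open>h(y) = 0\<close>.\<close>

no_notation vector_scalar_mult (infixl \<open>*s\<close> 70)

definition form_product :: "('a \<Rightarrow> 'v \<Rightarrow> 'v::plus) \<Rightarrow> ('v \<Rightarrow> 'a) \<Rightarrow> ('v \<Rightarrow> 'a) \<Rightarrow> 'v \<Rightarrow> 'v \<Rightarrow> 'v"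
  where "form_product sc f g = (\<lambda>x y. sc (f y) x + sc (g x) y)"

context vector_space
begin

lemma in_span_singleton_if_scale_eq:
  assumes "a *s x = b *s y" and "a \<noteq> 0"
  shows "x \<in> span {y}"
proof -
  have "x = (inverse a * b) *s y"
    using assms by (metis scale_scale scale_one left_inverse)
  then show ?thesis
    unfolding span_singleton by blast
qed

end

lemma (in finite_dimensional_vector_space) span_singleton_neq_UNIV:
  assumes "2 \<le> card Basis"
  shows "span {v} \<noteq> UNIV"
proof
  assume "span {v} = UNIV"
  then have "card Basis \<le> card {v}"
    using independent_span_bound[of "{v}" Basis] independent_Basis by auto
  with assms show False
    by simp
qed

locale linear_form_pair = vector_space +
  fixes f g :: "'b \<Rightarrow> 'a"
  assumes linear_f: "Vector_Spaces.linear scale (*) f"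
    and linear_g: "Vector_Spaces.linear scale (*) g"
begin

abbreviation circ :: "'b \<Rightarrow> 'b \<Rightarrow> 'b" (infixl \<open>\<diamond>\<close> 70)
  where "circ \<equiv> form_product scale f g"

lemma f_add: "f (x + y) = f x + f y" and f_scale: "f (c *s x) = c * f x"
  and g_add: "g (x + y) = g x + g y" and g_scale: "g (c *s x) = c * g x"
  using linear_f linear_g unfolding Vector_Spaces.linear_iff by auto

lemma f_diff: "f (x - y) = f x - f y" and g_diff: "g (x - y) = g x - g y"
  by (metis add_diff_cancel f_add eq_diff_eq) (metis add_diff_cancel g_add eq_diff_eq)

lemmas form_simps = form_product_def commutator_def f_add f_scale f_diff g_add g_scale g_diff
  scale_left_distrib scale_right_distrib scale_left_diff_distrib scale_right_diff_distrib

lemma linear_form_product_left: "Vector_Spaces.linear scale scale (\<lambda>x. x \<diamond> y)"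
  unfolding Vector_Spaces.linear_iff by (simp add: form_simps algebra_simps vector_space_axioms)

lemma linear_form_product_right: "Vector_Spaces.linear scale scale (\<lambda>y. x \<diamond> y)"
  unfolding Vector_Spaces.linear_iff by (simp add: form_simps algebra_simps vector_space_axioms)

lemma form_product_cyclic_commutator:
  "commutator circ x y \<diamond> z + commutator circ y z \<diamond> x + commutator circ z x \<diamond> y = 0"
  by (simp add: form_simps algebra_simps)

lemma form_product_associator_defect:
  "x \<diamond> (y \<diamond> z) - y \<diamond> (x \<diamond> z) - commutator circ y x \<diamond> z
     = f z *s ((2 * f y - g y) *s x - (2 * f x - g x) *s y) - (f x * g y - f y * g x) *s z"
proof -
  have double: "(a * 2) *s v = a *s v + a *s v" "(a * (b * 2)) *s v = (a * b) *s v + (a * b) *s v"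
    for a b v
    by (simp_all add: scale_left_distrib[symmetric] algebra_simps)
  show ?thesis
    by (simp add: form_simps double algebra_simps)
qed

lemma anti_pre_Lie_form_product_iff:
  "anti_pre_Lie scale circ \<longleftrightarrow>
     (\<forall>x y z. f z *s ((2 * f y - g y) *s x - (2 * f x - g x) *s y) = (f x * g y - f y * g x) *s z)"
  using form_product_associator_defect
  unfolding anti_pre_Lie_def eq_iff_diff_eq_0[of "_ \<diamond> _ - _ \<diamond> _"]
    eq_iff_diff_eq_0[of "f _ *s _"]
  by (simp add: linear_form_product_left linear_form_product_right form_product_cyclic_commutator)

lemma anti_pre_Lie_form_productI:
  assumes "f = (\<lambda>_. 0) \<or> g = (\<lambda>x. 2 * f x)"
  shows "anti_pre_Lie scale circ"
  using assms unfolding anti_pre_Lie_form_product_iff by (auto simp: algebra_simps)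

lemma anti_pre_Lie_form_productD:
  assumes no_line: "\<And>v. span {v} \<noteq> UNIV"
    and apl: "anti_pre_Lie scale circ"
  shows "f = (\<lambda>_. 0) \<or> g = (\<lambda>x. 2 * f x)"
proof (cases "f = (\<lambda>_. 0)")
  case False
  then obtain z0 where z0: "f z0 \<noteq> 0"
    by auto
  let ?h = "\<lambda>x. 2 * f x - g x"
  have defect_vanishes: "f z *s (?h y *s x - ?h x *s y) = (f x * g y - f y * g x) *s z" for x y z
    using apl unfolding anti_pre_Lie_form_product_iff by blast
  have cross_term: "f x * g y - f y * g x = 0" for x y
  proof (rule ccontr)
    assume "f x * g y - f y * g x \<noteq> 0"
    then have "z \<in> span {?h y *s x - ?h x *s y}" for z
      by (rule in_span_singleton_if_scale_eq[OF defect_vanishes[symmetric]])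
    with no_line show False
      by blast
  qed
  have h_swap: "?h y *s x = ?h x *s y" for x y
    using defect_vanishes[where x = x and y = y and z = z0] cross_term[of x y] z0 by simp
  have "?h y = 0" for y
  proof (rule ccontr)
    assume "?h y \<noteq> 0"
    then have "x \<in> span {y}" for x
      by (rule in_span_singleton_if_scale_eq[OF h_swap])
    with no_line show False
      by blast
  qed
  then show ?thesis
    by auto
qed simp

end

theorem proposition2p7:
  fixes sc :: "'a::field_char_0 \<Rightarrow> 'v::ab_group_add \<Rightarrow> 'v"
    and B :: "'v set"
    and f g :: "'v \<Rightarrow> 'a"
  assumes "finite_dimensional_vector_space sc B"
    and "card B \<ge> 2"
    and "Vector_Spaces.linear sc (*) f"
    and "Vector_Spaces.linear sc (*) g"
  shows "anti_pre_Lie sc (\<lambda>x y. sc (f y) x + sc (g x) y)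
           \<longleftrightarrow> (f = (\<lambda>_. 0) \<or> g = (\<lambda>x. 2 * f x))"
proof -
  interpret V: finite_dimensional_vector_space sc B by fact
  interpret linear_form_pair sc f g
    by (rule linear_form_pair.intro[OF V.vector_space_axioms linear_form_pair_axioms.intro[OF assms(3,4)]])
  have "\<And>v. V.span {v} \<noteq> UNIV"
    using V.span_singleton_neq_UNIV assms(2) by blast
  then show ?thesis
    using anti_pre_Lie_form_productI anti_pre_Lie_form_productD
    unfolding form_product_def by blast
qed

end
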